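(* Let $c>0$, let $\nu,\tilde\nu$ be probability measures on $\mathbb R_+$ different from $\boldsymbol d_0$, and for $z\in\mathbb C_+$ let $(\delta(z),\tilde\delta(z))\in\mathbb C_+^2$ be the unique solution of $\delta = c\int \frac{t}{-z(1+\tilde\delta t)}\nu(dt)$, $\tilde\delta=\int\frac{t}{-z(1+\delta t)}\tilde\nu(dt)$. Then $|\delta(z)|$ and $|\tilde\delta(z)|$ are bounded on every bounded region $\mathcal R\subset\mathbb C_+$ lying at positive distance from the imaginary axis (i.e. with $\inf_{z\in\mathcal R}|\Re z|>0$).
   Context: $\mathbb C_+=\{z:\Im z>0\}$, $\boldsymbol d_0$ is the Dirac mass at $0$; existence and uniqueness of the solution of the system in $\mathbb C_+^2$ is known. *)

theory Defs
  imports "HOL-Probability.Probability"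
begin

definition prob_on_Rplus :: "real measure \<Rightarrow> bool" where
  "prob_on_Rplus \<nu> \<longleftrightarrow> prob_space \<nu> \<and> sets \<nu> = sets borel \<and> (AE t in \<nu>. 0 \<le> t)"

end

theory Submission
  imports Defs
begin

text \<open>
  Write \<open>K\<^sub>M(s) = \<integral> t / (1 + s t) dM(t)\<close> and \<open>I\<^sub>M(s) = \<integral> \<bar>t / (1 + s t)\<bar>\<^sup>2 dM(t)\<close>
  (\<open>kernel_mean\<close> and \<open>kernel_energy\<close> below), so that the system reads
  \<open>-z\<delta> = c K\<^sub>\<nu>(\<delta>')\<close>, \<open>-z\<delta>' = K\<^sub>\<nu>'(\<delta>)\<close>. Since \<open>Im K(s) = -Im s I(s)\<close>, the imaginary parts of
  the two equations and the identity \<open>\<bar>z\<bar>\<^sup>2 Im \<delta> Im \<delta>' - Im (z\<delta>) Im (z\<delta>') = Im z Im (-z\<delta>\<delta>')\<close>,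
  whose right-hand side is \<open>\<ge> 0\<close> because \<open>-z\<delta>\<delta>' = c \<delta>' K\<^sub>\<nu>(\<delta>')\<close> and \<open>Im (s K(s)) \<ge> 0\<close>, give
  \<open>c I\<^sub>\<nu>(\<delta>') I\<^sub>\<nu>'(\<delta>) \<le> \<bar>z\<bar>\<^sup>2\<close>. Together with \<open>\<bar>K\<bar>\<^sup>2 \<le> I\<close> this bounds \<open>P = \<bar>z\<delta>\<delta>'\<bar>\<close> by \<open>\<surd>c\<close>
  and the energies \<open>\<bar>\<delta>'\<bar>\<^sup>2 I\<^sub>\<nu>(\<delta>')\<close>, \<open>\<bar>\<delta>\<bar>\<^sup>2 I\<^sub>\<nu>'(\<delta>)\<close> by constants. With bounded energy,
  \<open>s K\<^sub>M(s)\<close> tends to \<open>M(0,\<infinity>)\<close> as \<open>\<bar>s\<bar> \<rightarrow> \<infinity>\<close> and \<open>\<bar>s K\<^sub>M(s)\<bar>\<close> tends to \<open>0\<close> as \<open>s \<rightarrow> 0\<close>.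
  Hence if \<open>\<bar>\<delta>\<bar>\<close> were large, \<open>P = \<bar>\<delta> K\<^sub>\<nu>'(\<delta>)\<bar>\<close> would be close to \<open>\<nu>'(0,\<infinity>) > 0\<close>, while
  \<open>\<bar>\<delta>'\<bar> = P / \<bar>z\<delta>\<bar>\<close> would be small and so \<open>P = c \<bar>\<delta>' K\<^sub>\<nu>(\<delta>')\<bar>\<close> close to \<open>0\<close>.
  The argument only uses \<open>\<bar>z\<bar> \<ge> \<eta>\<close>.
\<close>

definition kernel_mean :: "real measure \<Rightarrow> complex \<Rightarrow> complex" where
  "kernel_mean M s = (LINT t|M. of_real t / (1 + s * of_real t))"

definition kernel_energy :: "real measure \<Rightarrow> complex \<Rightarrow> real" where
  "kernel_energy M s = (LINT t|M. (cmod (of_real t / (1 + s * of_real t)))\<^sup>2)"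

lemma one_add_mult_of_real_neq_zero:
  fixes s :: complex and t :: real
  assumes "Im s > 0" "t \<ge> 0"
  shows "1 + s * of_real t \<noteq> 0"
proof
  assume "1 + s * of_real t = 0"
  then have "Re (1 + s * of_real t) = 0" "Im (1 + s * of_real t) = 0"
    by simp_all
  with assms show False by auto
qed

lemma norm_one_add_mult_of_real_ge:
  fixes s :: complex and t :: real
  assumes "t \<ge> 0"
  shows "1 - cmod s * t \<le> cmod (1 + s * of_real t)" "cmod s * t - 1 \<le> cmod (1 + s * of_real t)"
  using norm_diff_ineq[of 1 "s * of_real t"] norm_diff_ineq[of "s * of_real t" 1] assms
  by (simp_all add: norm_mult add.commute)

lemma norm_kernel_le:
  fixes s :: complex and t :: real
  assumes "Im s > 0" "t \<ge> 0"
  shows "cmod (of_real t / (1 + s * of_real t)) \<le> 1 / Im s"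
proof -
  have "Im s * t \<le> cmod (1 + s * of_real t)"
    using abs_Im_le_cmod[of "1 + s * of_real t"] assms by simp
  moreover have "cmod (1 + s * of_real t) > 0"
    using one_add_mult_of_real_neq_zero[OF assms] by simp
  ultimately show ?thesis
    using assms by (simp add: norm_divide field_simps)
qed

lemma Im_kernel:
  fixes s :: complex and t :: real
  shows "Im (of_real t / (1 + s * of_real t)) = - Im s * (cmod (of_real t / (1 + s * of_real t)))\<^sup>2"
  by (simp add: Im_divide norm_divide power_divide cmod_power2 algebra_simps) (simp add: power2_eq_square)

lemma Im_mult_kernel_nonneg:
  fixes s :: complex and t :: real
  assumes "Im s > 0" "t \<ge> 0"
  shows "0 \<le> Im (s * (of_real t / (1 + s * of_real t)))"
proof -
  have "Im (s * (of_real t / (1 + s * of_real t))) = Im s * t / cmod (1 + s * of_real t) ^ 2"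
    by (simp add: Im_divide cmod_power2 algebra_simps)
  with assms show ?thesis by simp
qed

lemma le_half_add_square_div:
  fixes l x :: real
  assumes "l > 0"
  shows "x \<le> l / 2 + x\<^sup>2 / (2 * l)"
proof -
  have "2 * l * x \<le> l\<^sup>2 + x\<^sup>2"
    using zero_le_power2[of "x - l"] by (simp add: power2_eq_square algebra_simps)
  with assms show ?thesis
    by (simp add: field_simps power2_eq_square)
qed

text \<open>In the next two estimates \<open>\<sigma>\<close> (resp. \<open>R\<close>) stands for \<open>\<bar>s\<bar>\<close> and \<open>u\<close> for \<open>\<bar>1 + s t\<bar>\<close>.\<close>

lemma small_arg_integrand_bound:
  fixes \<sigma> T l t u :: real
  assumes "\<sigma> \<ge> 0" "T \<ge> 0" "\<sigma> * T \<le> 1 / 2" "l > 0"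
    and "t \<ge> 0" "u > 0" "1 - \<sigma> * t \<le> u"
  shows "\<sigma> * (t / u) \<le> 2 * \<sigma> * T + l / 2 * indicator {T<..} t + \<sigma>\<^sup>2 * (t / u)\<^sup>2 / (2 * l)"
proof (cases "t \<le> T")
  case True
  then have "\<sigma> * t \<le> \<sigma> * T"
    using assms by (simp add: mult_left_mono)
  then have "1 / 2 \<le> u"
    using assms by linarith
  then have "t * 1 \<le> t * (2 * u)"
    using assms by (intro mult_left_mono) auto
  then have "\<sigma> * (t / u) \<le> \<sigma> * (2 * t)"
    using assms by (intro mult_left_mono) (auto simp: field_simps)
  moreover have "0 \<le> \<sigma>\<^sup>2 * (t / u)\<^sup>2 / (2 * l)" "l / 2 * indicator {T<..} t = (0::real)"
    using True assms by simp_all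
  ultimately show ?thesis
    using \<open>\<sigma> * t \<le> \<sigma> * T\<close> by linarith
next
  case False
  have "\<sigma> * (t / u) \<le> l / 2 + \<sigma>\<^sup>2 * (t / u)\<^sup>2 / (2 * l)"
    using le_half_add_square_div[OF \<open>l > 0\<close>, of "\<sigma> * (t / u)"] by (simp only: power_mult_distrib)
  moreover have "0 \<le> 2 * \<sigma> * T" "l / 2 * indicator {T<..} t = l / 2"
    using False assms by simp_all
  ultimately show ?thesis
    by linarith
qed

lemma large_arg_integrand_bound:
  fixes R d l t u :: real
  assumes "R > 0" "d > 0" "2 \<le> R * d" "l > 0"
    and "t > 0" "u > 0" "1 - R * t \<le> u" "R * t - 1 \<le> u"
  shows "1 / u \<le> 2 / (R * d) + (2 + l / 2) * indicator {0<..d} t + 2 * R\<^sup>2 * (t / u)\<^sup>2 / l"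
proof (cases "t \<le> d")
  case True
  have "1 / u \<le> 2 + l / 2 + 2 * R\<^sup>2 * (t / u)\<^sup>2 / l"
  proof (cases "R * t \<le> 1 / 2")
    case True
    then have "1 / u \<le> 2"
      using assms by (simp add: field_simps)
    moreover have "0 \<le> 2 * R\<^sup>2 * (t / u)\<^sup>2 / l"
      using assms by simp
    ultimately show ?thesis
      using assms by linarith
  next
    case False
    have "1 \<le> (2 * R * t)\<^sup>2"
      using False by (intro one_le_power) simp
    then have "(1 / u)\<^sup>2 \<le> (2 * R * t)\<^sup>2 * (1 / u)\<^sup>2"
      using mult_right_mono[of 1 _ "(1 / u)\<^sup>2"] by simp
    also have "\<dots> = 4 * R\<^sup>2 * (t / u)\<^sup>2"
      by (simp add: power_mult_distrib power_divide)
    finally have "(1 / u)\<^sup>2 / (2 * l) \<le> 2 * R\<^sup>2 * (t / u)\<^sup>2 / l"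
      using assms by (simp add: field_simps)
    then show ?thesis
      using le_half_add_square_div[OF \<open>l > 0\<close>, of "1 / u"] assms by linarith
  qed
  moreover have "0 \<le> 2 / (R * d)" "(2 + l / 2) * indicator {0<..d} t = (2 + l / 2 :: real)"
    using True assms by simp_all
  ultimately show ?thesis
    by linarith
next
  case False
  then have "R * d \<le> R * t"
    using assms by (intro mult_left_mono) auto
  then have "2 \<le> R * t"
    using assms by linarith
  then have "1 / u \<le> 2 / (R * t)"
    using assms by (simp add: field_simps)
  also have "\<dots> \<le> 2 / (R * d)"
    using False assms by (intro divide_left_mono) auto
  finally have "1 / u \<le> 2 / (R * d)" .
  moreover have "0 \<le> 2 * R\<^sup>2 * (t / u)\<^sup>2 / l" "(2 + l / 2) * indicator {0<..d} t = (0::real)"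
    using False assms by simp_all
  ultimately show ?thesis
    by linarith
qed

lemma (in prob_space) square_norm_integral_le:
  fixes f :: "'a \<Rightarrow> 'b::{banach,second_countable_topology}"
  assumes "integrable M f" "integrable M (\<lambda>x. (norm (f x))\<^sup>2)"
  shows "(norm (integral\<^sup>L M f))\<^sup>2 \<le> expectation (\<lambda>x. (norm (f x))\<^sup>2)"
proof -
  have "(norm (integral\<^sup>L M f))\<^sup>2 \<le> (expectation (\<lambda>x. norm (f x)))\<^sup>2"
    by (intro power_mono integral_norm_bound) simp
  also have "\<dots> \<le> expectation (\<lambda>x. (norm (f x))\<^sup>2)"
    using variance_positive[of "\<lambda>x. norm (f x)"] variance_eq[of "\<lambda>x. norm (f x)"] assms by simp
  finally show ?thesis .
qed

lemma (in prob_space) norm_integral_le_affine_bound: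
  fixes f :: "'a \<Rightarrow> 'b::{banach,second_countable_topology}" and g :: "'a \<Rightarrow> real"
  assumes g: "integrable M g" and A: "A \<in> events"
    and bound: "AE x in M. norm (f x) \<le> a + b * indicator A x + c * g x"
  shows "norm (integral\<^sup>L M f) \<le> a + b * prob A + c * expectation g"
proof -
  have int: "integrable M (\<lambda>x. a + b * indicator A x + c * g x)"
    using g A by (intro Bochner_Integration.integrable_add integrable_mult_right)
      (auto simp: less_top[symmetric])
  have "norm (integral\<^sup>L M f) \<le> expectation (\<lambda>x. norm (f x))"
    by (rule integral_norm_bound)
  also have "\<dots> \<le> expectation (\<lambda>x. a + b * indicator A x + c * g x)"
  proof (rule integral_mono_AE'[OF int bound])
    show "AE x in M. 0 \<le> a + b * indicator A x + c * g x"
      using bound by eventually_elim (rule order_trans[OF norm_ge_zero])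
  qed
  also have "\<dots> = a + b * prob A + c * expectation g"
    using g A by (simp add: Bochner_Integration.integral_add less_top[symmetric] prob_space)
  finally show ?thesis .
qed

lemma (in real_distribution) eq_return_if_AE_eq:
  assumes "AE x in M. x = c"
  shows "M = return borel c"
proof (rule measure_eqI)
  fix A assume A: "A \<in> sets M"
  then have "emeasure M A = emeasure M (if c \<in> A then space M else {})"
    using assms by (intro emeasure_eq_AE) (auto elim!: eventually_mono)
  also have "\<dots> = emeasure (return borel c) A"
    using A emeasure_space_1 by simp
  finally show "emeasure M A = emeasure (return borel c) A" .
qed simp

locale nonneg_distribution = real_distribution M for M :: "real measure" +
  assumes AE_nonneg: "AE t in M. 0 \<le> t"

lemma prob_on_Rplus_iff_nonneg_distribution: "prob_on_Rplus M \<longleftrightarrow> nonneg_distribution M"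
  unfolding prob_on_Rplus_def nonneg_distribution_def nonneg_distribution_axioms_def
    real_distribution_def real_distribution_axioms_def by auto

context nonneg_distribution
begin

lemma measure_Ioi_zero_pos:
  assumes "M \<noteq> return borel 0"
  shows "measure M {0<..} > 0"
proof (rule ccontr)
  assume "\<not> measure M {0<..} > 0"
  then have "measure M {0<..} = 0"
    using measure_nonneg[of M "{0<..}"] by linarith
  then have "{0<..} \<in> null_sets M"
    by (simp add: null_sets_def emeasure_eq_measure)
  then have "AE t in M. t \<notin> {0<..}"
    by (rule AE_not_in)
  then have "AE t in M. t = 0"
    using AE_nonneg by eventually_elim auto
  with assms eq_return_if_AE_eq show False
    by blast
qed

lemma measure_Ioi_small:
  assumes "e > 0"
  obtains T where "T > 0" "measure M {T<..} < e"
proof -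
  have "eventually (\<lambda>T. 1 - e < cdf M T \<and> 0 < T) at_top"
    using order_tendstoD(1)[OF cdf_lim_at_top_prob, of "1 - e"] assms
    by (intro eventually_conj eventually_gt_at_top) auto
  then obtain T where "1 - e < cdf M T" "0 < T"
    by (auto simp: eventually_at_top_linorder)
  moreover have "measure M {T<..} = 1 - cdf M T"
    using prob_compl[of "{..T}"] by (simp add: cdf_def Compl_eq_Diff_UNIV[symmetric])
  ultimately show thesis
    using that by simp
qed

lemma measure_Ioc_zero_small:
  assumes "e > 0"
  obtains d where "d > 0" "measure M {0<..d} < e"
proof -
  have "(cdf M \<longlongrightarrow> cdf M 0) (at_right 0)"
    using cdf_is_right_cont by (simp add: continuous_within)
  then have "eventually (\<lambda>d. cdf M d < cdf M 0 + e) (at_right 0)"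
    using assms by (intro order_tendstoD(2)) auto
  then obtain b where "b > 0" and b: "\<And>d. 0 < d \<Longrightarrow> d < b \<Longrightarrow> cdf M d < cdf M 0 + e"
    by (auto simp: eventually_at_right_field)
  show thesis
  proof (rule that)
    show "b / 2 > 0" using \<open>b > 0\<close> by simp
    show "measure M {0<..b / 2} < e"
      using b[of "b / 2"] cdf_diff_eq[of 0 "b / 2"] \<open>b > 0\<close> by simp
  qed
qed

lemma integrable_bounded_on_nonneg:
  fixes f :: "real \<Rightarrow> 'b::{banach,second_countable_topology}"
  assumes "f \<in> borel_measurable borel" "\<And>t. t \<ge> 0 \<Longrightarrow> norm (f t) \<le> B"
  shows "integrable M f"
  using AE_nonneg assms by (intro integrable_const_bound[where B = B]) (auto elim!: eventually_mono)

lemma integrable_kernel: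
  assumes "Im s > 0"
  shows "integrable M (\<lambda>t. of_real t / (1 + s * of_real t))"
  using norm_kernel_le[OF assms] by (intro integrable_bounded_on_nonneg) auto

lemma integrable_kernel_square:
  assumes "Im s > 0"
  shows "integrable M (\<lambda>t. (cmod (of_real t / (1 + s * of_real t)))\<^sup>2)"
  using norm_kernel_le[OF assms] by (intro integrable_bounded_on_nonneg[where B = "(1 / Im s)\<^sup>2"])
    (auto intro!: power_mono)

lemma Im_kernel_mean:
  assumes "Im s > 0"
  shows "Im (kernel_mean M s) = - Im s * kernel_energy M s"
  using integral_Im[OF integrable_kernel[OF assms]]
  by (simp add: kernel_mean_def kernel_energy_def Im_kernel)

lemma norm_kernel_mean_square_le:
  assumes "Im s > 0"
  shows "(cmod (kernel_mean M s))\<^sup>2 \<le> kernel_energy M s"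
  unfolding kernel_mean_def kernel_energy_def
  using assms by (intro square_norm_integral_le integrable_kernel integrable_kernel_square)

lemma Im_mult_kernel_mean_nonneg:
  assumes "Im s > 0"
  shows "0 \<le> Im (s * kernel_mean M s)"
proof -
  have "Im (s * kernel_mean M s) = Im (LINT t|M. s * (of_real t / (1 + s * of_real t)))"
    by (simp only: kernel_mean_def integral_mult_right_zero)
  also have "\<dots> = (LINT t|M. Im (s * (of_real t / (1 + s * of_real t))))"
    using assms by (intro integral_Im[symmetric] integrable_mult_right integrable_kernel)
  also have "\<dots> \<ge> 0"
    by (intro integral_nonneg_AE eventually_mono[OF AE_nonneg] Im_mult_kernel_nonneg[OF assms])
  finally show ?thesis .
qed

lemma norm_mult_kernel_mean_le:
  assumes s: "Im s > 0" and T: "T \<ge> 0" "cmod s * T \<le> 1 / 2" and l: "l > 0"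
  shows "cmod s * cmod (kernel_mean M s)
    \<le> 2 * cmod s * T + l / 2 * measure M {T<..} + (cmod s)\<^sup>2 / (2 * l) * kernel_energy M s"
proof -
  have "cmod s * cmod (kernel_mean M s) = cmod (LINT t|M. s * (of_real t / (1 + s * of_real t)))"
    by (simp only: kernel_mean_def integral_mult_right_zero norm_mult)
  also have "\<dots> \<le> 2 * cmod s * T + l / 2 * measure M {T<..} + (cmod s)\<^sup>2 / (2 * l) * kernel_energy M s"
    unfolding kernel_energy_def
  proof (rule norm_integral_le_affine_bound[OF integrable_kernel_square[OF s]])
    show "AE t in M. cmod (s * (of_real t / (1 + s * of_real t)))
      \<le> 2 * cmod s * T + l / 2 * indicator {T<..} t
        + (cmod s)\<^sup>2 / (2 * l) * (cmod (of_real t / (1 + s * of_real t)))\<^sup>2"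
      using AE_nonneg
    proof eventually_elim
      case (elim t)
      have "cmod (1 + s * of_real t) > 0"
        using one_add_mult_of_real_neq_zero[OF s elim] by simp
      from small_arg_integrand_bound[OF norm_ge_zero T l elim this norm_one_add_mult_of_real_ge(1)[OF elim]]
      show ?case
        using elim by (simp add: norm_mult norm_divide)
    qed
  qed simp
  finally show ?thesis .
qed

lemma norm_mass_sub_mult_kernel_mean_le:
  assumes s: "Im s > 0" and d: "d > 0" "2 \<le> cmod s * d" and l: "l > 0"
  shows "cmod (of_real (measure M {0<..}) - s * kernel_mean M s)
    \<le> 2 / (cmod s * d) + (2 + l / 2) * measure M {0<..d} + 2 * (cmod s)\<^sup>2 / l * kernel_energy M s"
proof -
  have "s * kernel_mean M s = (LINT t|M. s * (of_real t / (1 + s * of_real t)))"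
    by (simp only: kernel_mean_def integral_mult_right_zero)
  then have "of_real (measure M {0<..}) - s * kernel_mean M s
      = (LINT t|M. of_real (indicator {0<..} t) - s * (of_real t / (1 + s * of_real t)))"
    using integrable_mult_right[OF integrable_kernel[OF s], of s]
    by (simp add: Bochner_Integration.integral_diff less_top[symmetric])
  also have "cmod \<dots> \<le> 2 / (cmod s * d) + (2 + l / 2) * measure M {0<..d} + 2 * (cmod s)\<^sup>2 / l * kernel_energy M s"
    unfolding kernel_energy_def
  proof (rule norm_integral_le_affine_bound[OF integrable_kernel_square[OF s]])
    show "AE t in M. cmod (of_real (indicator {0<..} t) - s * (of_real t / (1 + s * of_real t)))
      \<le> 2 / (cmod s * d) + (2 + l / 2) * indicator {0<..d} t
        + 2 * (cmod s)\<^sup>2 / l * (cmod (of_real t / (1 + s * of_real t)))\<^sup>2"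
      using AE_nonneg
    proof eventually_elim
      case (elim t)
      show ?case
      proof (cases "t = 0")
        case True
        then show ?thesis
          using d l by simp
      next
        case False
        then have "t > 0"
          using elim by simp
        have nz: "1 + s * of_real t \<noteq> 0"
          using one_add_mult_of_real_neq_zero[OF s elim] .
        have "cmod s > 0"
          using s by auto
        have "1 - s * (of_real t / (1 + s * of_real t)) = 1 / (1 + s * of_real t)"
          using nz by (simp add: field_simps)
        then show ?thesis
          using large_arg_integrand_bound[OF \<open>cmod s > 0\<close> d l \<open>t > 0\<close> _
              norm_one_add_mult_of_real_ge[OF elim]] \<open>t > 0\<close> nz
          by (simp add: norm_divide)
      qed
    qed
  qed simp
  finally show ?thesis .
qed

lemma kernel_mean_near_zero:
  assumes C: "C > 0" and e: "e > 0"
  obtains \<sigma>\<^sub>0 where "\<sigma>\<^sub>0 > 0"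
    "\<And>s. Im s > 0 \<Longrightarrow> cmod s \<le> \<sigma>\<^sub>0 \<Longrightarrow> (cmod s)\<^sup>2 * kernel_energy M s \<le> C
      \<Longrightarrow> cmod s * cmod (kernel_mean M s) \<le> e"
proof -
  define l where "l = 3 * C / (2 * e)"
  have l: "l > 0"
    using C e by (simp add: l_def)
  obtain T where T: "T > 0" "measure M {T<..} < 2 * e / (3 * l)"
    using measure_Ioi_small[of "2 * e / (3 * l)"] e l by auto
  show thesis
  proof (rule that)
    show "min (1 / (2 * T)) (e / (6 * T)) > 0"
      using T e by simp
    fix s assume s: "Im s > 0" "cmod s \<le> min (1 / (2 * T)) (e / (6 * T))"
      and energy: "(cmod s)\<^sup>2 * kernel_energy M s \<le> C"
    have sT: "cmod s * T \<le> 1 / 2" "2 * cmod s * T \<le> e / 3"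
      using s(2) T by (auto simp: field_simps)
    have "l / 2 * measure M {T<..} \<le> e / 3"
      using T l by (simp add: field_simps)
    moreover have "(cmod s)\<^sup>2 / (2 * l) * kernel_energy M s \<le> e / 3"
      using energy l C e by (simp add: l_def field_simps)
    ultimately show "cmod s * cmod (kernel_mean M s) \<le> e"
      using norm_mult_kernel_mean_le[OF s(1) _ sT(1) l] T sT(2) by linarith
  qed
qed

lemma kernel_mean_near_infinity:
  assumes C: "C > 0" and e: "e > 0"
  obtains R\<^sub>0 where
    "\<And>s. Im s > 0 \<Longrightarrow> R\<^sub>0 \<le> cmod s \<Longrightarrow> (cmod s)\<^sup>2 * kernel_energy M s \<le> C
      \<Longrightarrow> cmod (of_real (measure M {0<..}) - s * kernel_mean M s) \<le> e"
proof -
  define l where "l = 6 * C / e"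
  have l: "l > 0"
    using C e by (simp add: l_def)
  obtain d where d: "d > 0" "measure M {0<..d} < e / (3 * (2 + l / 2))"
    using measure_Ioc_zero_small[of "e / (3 * (2 + l / 2))"] e l by auto
  show thesis
  proof (rule that)
    fix s assume s: "Im s > 0" "max (2 / d) (6 / (d * e)) \<le> cmod s"
      and energy: "(cmod s)\<^sup>2 * kernel_energy M s \<le> C"
    have sd: "2 \<le> cmod s * d" "2 / (cmod s * d) \<le> e / 3"
      using s(2) d e by (auto simp: field_simps)
    have "(2 + l / 2) * measure M {0<..d} \<le> e / 3"
      using d l by (simp add: field_simps)
    moreover have "2 * (cmod s)\<^sup>2 / l * kernel_energy M s \<le> e / 3"
      using energy l C e by (simp add: l_def field_simps)
    ultimately show "cmod (of_real (measure M {0<..}) - s * kernel_mean M s) \<le> e"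
      using norm_mass_sub_mult_kernel_mean_le[OF s(1) d(1) sd(1) l] sd(2) by linarith
  qed
qed

end

lemma bounds_from_square_inequalities:
  fixes a b P S S' :: real
  assumes ab: "a > 0" "b > 0" and P: "P > 0"
    and PS: "P\<^sup>2 \<le> a\<^sup>2 * S" and PS': "P\<^sup>2 \<le> b\<^sup>2 * S'" and SS': "a * b * S * S' \<le> P\<^sup>2"
  shows "P \<le> sqrt (a * b)" "S \<le> b / a" "S' \<le> a / b"
proof -
  have pos: "0 < a\<^sup>2 * S" "0 < b\<^sup>2 * S'"
    using PS PS' zero_less_power[OF P, of 2] by linarith+
  then have "S > 0" "S' > 0"
    using ab by (simp_all add: zero_less_mult_iff)
  have "(a * S) * (b * S') \<le> b * (b * S')"
    using SS' PS' by (simp add: power2_eq_square algebra_simps)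
  then show "S \<le> b / a"
    using ab \<open>S' > 0\<close> by (simp add: field_simps)
  have "(b * S') * (a * S) \<le> a * (a * S)"
    using SS' PS by (simp add: power2_eq_square algebra_simps)
  then show "S' \<le> a / b"
    using ab \<open>S > 0\<close> by (simp add: field_simps)
  have "P\<^sup>2 * P\<^sup>2 \<le> (a\<^sup>2 * S) * (b\<^sup>2 * S')"
    using PS PS' pos by (intro mult_mono) auto
  also have "\<dots> = a * b * (a * b * S * S')"
    by (simp add: power2_eq_square)
  also have "\<dots> \<le> a * b * P\<^sup>2"
    using SS' ab by simp
  finally have "P\<^sup>2 * P\<^sup>2 \<le> (a * b) * P\<^sup>2"
    by (simp only: mult.commute)
  then have "P\<^sup>2 \<le> a * b"
    using zero_less_power[OF P, of 2] by (rule mult_right_le_imp_le)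
  then show "P \<le> sqrt (a * b)"
    using P by (simp add: real_le_rsqrt)
qed

lemma Im_mult_Im_mult_le:
  fixes z p q :: complex
  assumes "Im z > 0" "Im (- z * p * q) \<ge> 0"
  shows "Im (z * p) * Im (z * q) \<le> (cmod z)\<^sup>2 * Im p * Im q"
proof -
  have "(cmod z)\<^sup>2 * Im p * Im q - Im (z * p) * Im (z * q) = Im z * Im (- z * p * q)"
    unfolding cmod_power2 by (simp add: power2_eq_square algebra_simps)
  moreover have "0 \<le> Im z * Im (- z * p * q)"
    using assms by simp
  ultimately show ?thesis
    by linarith
qed

lemma coupled_system_estimates:
  fixes z p q K\<^sub>1 K\<^sub>2 :: complex and c\<^sub>1 c\<^sub>2 I\<^sub>1 I\<^sub>2 :: real
  assumes pos: "c\<^sub>1 > 0" "c\<^sub>2 > 0" "Im z > 0" "Im p > 0" "Im q > 0"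
    and eq\<^sub>1: "- z * p = of_real c\<^sub>1 * K\<^sub>1" and eq\<^sub>2: "- z * q = of_real c\<^sub>2 * K\<^sub>2"
    and Im\<^sub>1: "Im K\<^sub>1 = - Im q * I\<^sub>1" and Im\<^sub>2: "Im K\<^sub>2 = - Im p * I\<^sub>2"
    and sq\<^sub>1: "(cmod K\<^sub>1)\<^sup>2 \<le> I\<^sub>1" and sq\<^sub>2: "(cmod K\<^sub>2)\<^sup>2 \<le> I\<^sub>2"
    and Im_qK\<^sub>1: "0 \<le> Im (q * K\<^sub>1)"
  shows "cmod (z * p * q) \<le> sqrt (c\<^sub>1 * c\<^sub>2)"
    "(cmod q)\<^sup>2 * I\<^sub>1 \<le> c\<^sub>2 / c\<^sub>1" "(cmod p)\<^sup>2 * I\<^sub>2 \<le> c\<^sub>1 / c\<^sub>2"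
    and "cmod (z * p * q) = c\<^sub>1 * cmod K\<^sub>1 * cmod q" "cmod (z * p * q) = c\<^sub>2 * cmod K\<^sub>2 * cmod p"
proof -
  define P where "P = cmod (z * p * q)"
  have Im_zp: "Im (z * p) = c\<^sub>1 * Im q * I\<^sub>1" and Im_zq: "Im (z * q) = c\<^sub>2 * Im p * I\<^sub>2"
    using arg_cong[OF eq\<^sub>1, of Im] arg_cong[OF eq\<^sub>2, of Im] Im\<^sub>1 Im\<^sub>2 by simp_all
  have "- z * p * q = of_real c\<^sub>1 * (q * K\<^sub>1)"
    using eq\<^sub>1 by (simp add: mult_ac)
  then have "Im (- z * p * q) \<ge> 0"
    using pos Im_qK\<^sub>1 by simp
  from Im_mult_Im_mult_le[OF pos(3) this]
  have "(c\<^sub>1 * c\<^sub>2 * I\<^sub>1 * I\<^sub>2) * (Im p * Im q) \<le> (cmod z)\<^sup>2 * (Im p * Im q)"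
    unfolding Im_zp Im_zq by (simp add: mult_ac)
  then have energies: "c\<^sub>1 * c\<^sub>2 * I\<^sub>1 * I\<^sub>2 \<le> (cmod z)\<^sup>2"
    using pos by (simp add: mult_le_cancel_right)
  show P\<^sub>1: "P = c\<^sub>1 * cmod K\<^sub>1 * cmod q" and P\<^sub>2: "P = c\<^sub>2 * cmod K\<^sub>2 * cmod p"
    using arg_cong[OF eq\<^sub>1, of "\<lambda>w. cmod (w * q)"] arg_cong[OF eq\<^sub>2, of "\<lambda>w. cmod (w * p)"] pos
    by (simp_all add: P_def norm_mult mult_ac)
  have "P > 0"
    using pos by (auto simp: P_def)
  moreover have "P\<^sup>2 \<le> c\<^sub>1\<^sup>2 * ((cmod q)\<^sup>2 * I\<^sub>1)"
    using mult_left_mono[OF sq\<^sub>1, of "c\<^sub>1\<^sup>2 * (cmod q)\<^sup>2"] unfolding P\<^sub>1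
    by (simp add: power_mult_distrib mult_ac)
  moreover have "P\<^sup>2 \<le> c\<^sub>2\<^sup>2 * ((cmod p)\<^sup>2 * I\<^sub>2)"
    using mult_left_mono[OF sq\<^sub>2, of "c\<^sub>2\<^sup>2 * (cmod p)\<^sup>2"] unfolding P\<^sub>2
    by (simp add: power_mult_distrib mult_ac)
  moreover have "c\<^sub>1 * c\<^sub>2 * ((cmod q)\<^sup>2 * I\<^sub>1) * ((cmod p)\<^sup>2 * I\<^sub>2) \<le> P\<^sup>2"
    using mult_left_mono[OF energies, of "(cmod p)\<^sup>2 * (cmod q)\<^sup>2"] unfolding P_def
    by (simp add: norm_mult power_mult_distrib mult_ac)
  ultimately show "cmod (z * p * q) \<le> sqrt (c\<^sub>1 * c\<^sub>2)"
    "(cmod q)\<^sup>2 * I\<^sub>1 \<le> c\<^sub>2 / c\<^sub>1" "(cmod p)\<^sup>2 * I\<^sub>2 \<le> c\<^sub>1 / c\<^sub>2"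
    using bounds_from_square_inequalities[OF pos(1,2)] unfolding P_def by blast+
qed

lemma kernel_mean_equation:
  fixes M :: "real measure" and z p q :: complex and c :: real
  assumes "z \<noteq> 0" and "p = of_real c * (LINT t|M. of_real t / (- z * (1 + q * of_real t)))"
  shows "- z * p = of_real c * kernel_mean M q"
proof -
  have "(LINT t|M. of_real t / (- z * (1 + q * of_real t))) = kernel_mean M q / (- z)"
    unfolding kernel_mean_def
    by (simp only: mult.commute[of "- z"] divide_divide_eq_left[symmetric] integral_divide_zero)
  with assms show ?thesis
    by simp
qed

lemma coupled_solution_bounded_left:
  assumes M\<^sub>1: "nonneg_distribution M\<^sub>1" and M\<^sub>2: "nonneg_distribution M\<^sub>2"
    and c: "c\<^sub>1 > 0" "c\<^sub>2 > 0" and \<eta>: "\<eta> > 0" and mass: "measure M\<^sub>2 {0<..} > 0"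
  obtains B where "\<And>z p q. Im z > 0 \<Longrightarrow> \<eta> \<le> cmod z \<Longrightarrow> Im p > 0 \<Longrightarrow> Im q > 0 \<Longrightarrow>
      - z * p = of_real c\<^sub>1 * kernel_mean M\<^sub>1 q \<Longrightarrow> - z * q = of_real c\<^sub>2 * kernel_mean M\<^sub>2 p \<Longrightarrow>
      cmod p \<le> B"
proof -
  define m where "m = measure M\<^sub>2 {0<..}"
  obtain R\<^sub>0 where R\<^sub>0: "\<And>s. Im s > 0 \<Longrightarrow> R\<^sub>0 \<le> cmod s \<Longrightarrow>
      (cmod s)\<^sup>2 * kernel_energy M\<^sub>2 s \<le> c\<^sub>1 / c\<^sub>2 \<Longrightarrow> cmod (of_real m - s * kernel_mean M\<^sub>2 s) \<le> m / 2"
    using nonneg_distribution.kernel_mean_near_infinity[OF M\<^sub>2, of "c\<^sub>1 / c\<^sub>2" "m / 2"] c mass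
    unfolding m_def by auto
  obtain \<sigma>\<^sub>0 where \<sigma>\<^sub>0: "\<sigma>\<^sub>0 > 0" and small: "\<And>s. Im s > 0 \<Longrightarrow> cmod s \<le> \<sigma>\<^sub>0 \<Longrightarrow>
      (cmod s)\<^sup>2 * kernel_energy M\<^sub>1 s \<le> c\<^sub>2 / c\<^sub>1 \<Longrightarrow>
      cmod s * cmod (kernel_mean M\<^sub>1 s) \<le> c\<^sub>2 * m / (4 * c\<^sub>1)"
    using nonneg_distribution.kernel_mean_near_zero[OF M\<^sub>1, of "c\<^sub>2 / c\<^sub>1" "c\<^sub>2 * m / (4 * c\<^sub>1)"] c mass
    unfolding m_def by auto
  show thesis
  proof (rule that)
    fix z p q
    assume z: "Im z > 0" "\<eta> \<le> cmod z" and pq: "Im p > 0" "Im q > 0"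
      and eq\<^sub>1: "- z * p = of_real c\<^sub>1 * kernel_mean M\<^sub>1 q"
      and eq\<^sub>2: "- z * q = of_real c\<^sub>2 * kernel_mean M\<^sub>2 p"
    show "cmod p \<le> max R\<^sub>0 (sqrt (c\<^sub>1 * c\<^sub>2) / (\<eta> * \<sigma>\<^sub>0))"
    proof (rule ccontr)
      assume "\<not> ?thesis"
      then have large: "R\<^sub>0 \<le> cmod p" "sqrt (c\<^sub>1 * c\<^sub>2) / (\<eta> * \<sigma>\<^sub>0) < cmod p"
        by auto
      have "sqrt (c\<^sub>1 * c\<^sub>2) < \<eta> * cmod p * \<sigma>\<^sub>0"
        using large(2) \<eta> \<sigma>\<^sub>0 by (simp add: divide_less_eq mult_ac)
      note estimates = coupled_system_estimates[OF c z(1) pq eq\<^sub>1 eq\<^sub>2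
          nonneg_distribution.Im_kernel_mean[OF M\<^sub>1 pq(2)] nonneg_distribution.Im_kernel_mean[OF M\<^sub>2 pq(1)]
          nonneg_distribution.norm_kernel_mean_square_le[OF M\<^sub>1 pq(2)]
          nonneg_distribution.norm_kernel_mean_square_le[OF M\<^sub>2 pq(1)]
          nonneg_distribution.Im_mult_kernel_mean_nonneg[OF M\<^sub>1 pq(2)]]
      define P where "P = cmod (z * p * q)"
      have "m / 2 \<le> cmod p * cmod (kernel_mean M\<^sub>2 p)"
        using R\<^sub>0[OF pq(1) large(1) estimates(3)] norm_triangle_ineq2[of "of_real m" "p * kernel_mean M\<^sub>2 p"]
          mass by (simp add: m_def norm_mult)
      then have P_lower: "c\<^sub>2 * m / 2 \<le> P"
        using estimates(5) c by (simp add: P_def mult_ac)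
      have "\<eta> * cmod p * cmod q \<le> sqrt (c\<^sub>1 * c\<^sub>2)"
        using mult_right_mono[OF z(2), of "cmod p * cmod q"] estimates(1) by (simp add: norm_mult mult_ac)
      then have "\<eta> * cmod p * cmod q < \<eta> * cmod p * \<sigma>\<^sub>0"
        using \<open>sqrt (c\<^sub>1 * c\<^sub>2) < \<eta> * cmod p * \<sigma>\<^sub>0\<close> by linarith
      then have "cmod q < \<sigma>\<^sub>0"
        by (rule mult_left_less_imp_less) (use \<eta> in simp)
      from small[OF pq(2) less_imp_le[OF this] estimates(2)]
      have "P \<le> c\<^sub>2 * m / 4"
        using estimates(4) c by (simp add: P_def field_simps)
      moreover have "0 < c\<^sub>2 * m"
        using c mass by (simp add: m_def)
      ultimately show False
        using P_lower by linarith
    qed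
  qed
qed

lemma coupled_solution_bounded:
  assumes M\<^sub>1: "nonneg_distribution M\<^sub>1" "M\<^sub>1 \<noteq> return borel 0"
    and M\<^sub>2: "nonneg_distribution M\<^sub>2" "M\<^sub>2 \<noteq> return borel 0"
    and c: "c\<^sub>1 > 0" "c\<^sub>2 > 0" and \<eta>: "\<eta> > 0"
  obtains B where "\<And>z p q. Im z > 0 \<Longrightarrow> \<eta> \<le> cmod z \<Longrightarrow> Im p > 0 \<Longrightarrow> Im q > 0 \<Longrightarrow>
      - z * p = of_real c\<^sub>1 * kernel_mean M\<^sub>1 q \<Longrightarrow> - z * q = of_real c\<^sub>2 * kernel_mean M\<^sub>2 p \<Longrightarrow>
      cmod p \<le> B \<and> cmod q \<le> B"
proof -
  obtain B\<^sub>1 where B\<^sub>1: "\<And>z p q. Im z > 0 \<Longrightarrow> \<eta> \<le> cmod z \<Longrightarrow> Im p > 0 \<Longrightarrow> Im q > 0 \<Longrightarrow>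
      - z * p = of_real c\<^sub>1 * kernel_mean M\<^sub>1 q \<Longrightarrow> - z * q = of_real c\<^sub>2 * kernel_mean M\<^sub>2 p \<Longrightarrow>
      cmod p \<le> B\<^sub>1"
    using coupled_solution_bounded_left[OF M\<^sub>1(1) M\<^sub>2(1) c \<eta>
        nonneg_distribution.measure_Ioi_zero_pos[OF M\<^sub>2]] by blast
  obtain B\<^sub>2 where B\<^sub>2: "\<And>z p q. Im z > 0 \<Longrightarrow> \<eta> \<le> cmod z \<Longrightarrow> Im p > 0 \<Longrightarrow> Im q > 0 \<Longrightarrow>
      - z * p = of_real c\<^sub>2 * kernel_mean M\<^sub>2 q \<Longrightarrow> - z * q = of_real c\<^sub>1 * kernel_mean M\<^sub>1 p \<Longrightarrow>
      cmod p \<le> B\<^sub>2"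
    using coupled_solution_bounded_left[OF M\<^sub>2(1) M\<^sub>1(1) c(2,1) \<eta>
        nonneg_distribution.measure_Ioi_zero_pos[OF M\<^sub>1]] by blast
  show thesis
    by (rule that[of "max B\<^sub>1 B\<^sub>2"]) (use B\<^sub>1 B\<^sub>2 in fastforce)
qed

theorem lemma3p2:
  fixes c :: real and \<nu> \<nu>' :: "real measure"
    and \<delta> \<delta>' :: "complex \<Rightarrow> complex"
  assumes c_pos: "c > 0"
    and \<nu>: "prob_on_Rplus \<nu>" and \<nu>_ne: "\<nu> \<noteq> return borel 0"
    and \<nu>': "prob_on_Rplus \<nu>'" and \<nu>'_ne: "\<nu>' \<noteq> return borel 0"
    and in_Cplus: "\<And>z. Im z > 0 \<Longrightarrow> Im (\<delta> z) > 0 \<and> Im (\<delta>' z) > 0"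
    and eq1: "\<And>z. Im z > 0 \<Longrightarrow>
      \<delta> z = of_real c * (LINT t|\<nu>. of_real t / (- z * (1 + \<delta>' z * of_real t)))"
    and eq2: "\<And>z. Im z > 0 \<Longrightarrow>
      \<delta>' z = (LINT t|\<nu>'. of_real t / (- z * (1 + \<delta> z * of_real t)))"
  shows "\<forall>R. R \<subseteq> {z. Im z > 0} \<longrightarrow> bounded R \<longrightarrow> (\<exists>\<eta>>0. \<forall>z\<in>R. \<bar>Re z\<bar> \<ge> \<eta>) \<longrightarrow>
           (\<exists>B. \<forall>z\<in>R. cmod (\<delta> z) \<le> B \<and> cmod (\<delta>' z) \<le> B)"
proof (intro allI impI)
  fix R :: "complex set"
  assume R: "R \<subseteq> {z. Im z > 0}" "bounded R" and "\<exists>\<eta>>0. \<forall>z\<in>R. \<bar>Re z\<bar> \<ge> \<eta>"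
  then obtain \<eta> where \<eta>: "\<eta> > 0" "\<And>z. z \<in> R \<Longrightarrow> \<eta> \<le> \<bar>Re z\<bar>"
    by blast
  obtain B where B: "\<And>z p q. Im z > 0 \<Longrightarrow> \<eta> \<le> cmod z \<Longrightarrow> Im p > 0 \<Longrightarrow> Im q > 0 \<Longrightarrow>
      - z * p = of_real c * kernel_mean \<nu> q \<Longrightarrow> - z * q = of_real 1 * kernel_mean \<nu>' p \<Longrightarrow>
      cmod p \<le> B \<and> cmod q \<le> B"
    using coupled_solution_bounded[OF _ \<nu>_ne _ \<nu>'_ne c_pos zero_less_one \<eta>(1)] \<nu> \<nu>'
    by (auto simp: prob_on_Rplus_iff_nonneg_distribution)
  have "cmod (\<delta> z) \<le> B \<and> cmod (\<delta>' z) \<le> B" if "z \<in> R" for z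
  proof (rule B)
    show z: "Im z > 0" "\<eta> \<le> cmod z"
      using that R(1) \<eta>(2) abs_Re_le_cmod[of z] by (auto intro: order_trans)
    show "Im (\<delta> z) > 0" "Im (\<delta>' z) > 0"
      using in_Cplus[OF z(1)] by auto
    show "- z * \<delta> z = of_real c * kernel_mean \<nu> (\<delta>' z)"
      using z(1) by (intro kernel_mean_equation eq1) auto
    show "- z * \<delta>' z = of_real 1 * kernel_mean \<nu>' (\<delta> z)"
      using z(1) eq2[OF z(1)] by (intro kernel_mean_equation) auto
  qed
  then show "\<exists>B. \<forall>z\<in>R. cmod (\<delta> z) \<le> B \<and> cmod (\<delta>' z) \<le> B"
    by blast
qed

end
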